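(* Assume the ground-truth assumption holds for $f^*$, $\mathcal K$ and $K$. Then for any $f_{\mathrm{teacher}}\in\mathcal H$, any $T>0$ and any integer $S\ge K$, the predictor $f_T=\mathcal T^{\mathcal K}_T(f_{\mathrm{teacher}})$ satisfies $$\mathcal L(f_T)\ \le\ \mathcal L(f_{\mathrm{teacher}})+\frac{e^{-\lambda_KT}}{2-e^{-\lambda_KT}}\|f^*\|_{\mathcal D}^2-\big(1-\lambda_{S+1}^2T^2\big)\sum_{k\ge S+1}\langle f_{\mathrm{teacher}},e_k\rangle_{\mathcal D}^2 .$$
   Context: $\mathcal D$ is a probability distribution on an input space $\mathcal X$; $\langle f,g\rangle_{\mathcal D}=\mathbb E_{x\sim\mathcal D}[f(x)g(x)]$, $\|f\|_{\mathcal D}^2=\langle f,f\rangle_{\mathcal D}$. For a target $f^*\in L^2(\mathcal D)$, $\mathcal L(f)=\mathbb E_{x\sim\mathcal D}[(f(x)-f^*(x))^2]$. $\mathcal K$ is a p.s.d. kernel with $\mathcal K(x,x')=\sum_{k\ge1}\lambda_ke_k(x)e_k(x')$, $\lambda_1\ge\lambda_2\ge\dots\ge0$, $\langle e_i,e_j\rangle_{\mathcal D}=\delta_{ij}$; $\mathcal H$ is the closed span of $\{e_k\}$ in $L^2(\mathcal D)$, and $f^*\in\mathcal H$. For $f\in\mathcal H$, $\mathcal T^{\mathcal K}_t(f)=\sum_k(1-e^{-\lambda_kt})\langle f,e_k\rangle_{\mathcal D}e_k$. Ground-truth assumption (for a positive integer $K$): $\langle f^*,e_k\rangle_{\mathcal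 D}=0$ for all $k>K$, and $\langle f^*,e_k\rangle_{\mathcal D}=0$ for every $k\le K$ with $\lambda_k=0$. *)

theory Defs
  imports "HOL-Probability.Probability"
begin

text \<open>Functions in L2(D): measurable and square integrable (elements of L2(D) are
represented by functions; everything below is invariant under a.e. modification).
Spectral indices are 1-based as in the paper: only k \<ge> 1 is used.\<close>

definition sq_int :: "'x measure \<Rightarrow> ('x \<Rightarrow> real) \<Rightarrow> bool" where
  "sq_int D f \<longleftrightarrow> f \<in> borel_measurable D \<and> integrable D (\<lambda>x. (f x)\<^sup>2)"

definition ipD :: "'x measure \<Rightarrow> ('x \<Rightarrow> real) \<Rightarrow> ('x \<Rightarrow> real) \<Rightarrow> real" where
  "ipD D f g = (LINT x|D. f x * g x)"

definition normD :: "'x measure \<Rightarrow> ('x \<Rightarrow> real) \<Rightarrow> real" where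
  "normD D f = sqrt (ipD D f f)"

definition orthonormal_fam :: "'x measure \<Rightarrow> (nat \<Rightarrow> 'x \<Rightarrow> real) \<Rightarrow> bool" where
  "orthonormal_fam D e \<longleftrightarrow>
     (\<forall>i\<ge>1. sq_int D (e i)) \<and>
     (\<forall>i\<ge>1. \<forall>j\<ge>1. ipD D (e i) (e j) = (if i = j then 1 else 0))"

text \<open>H = closed span of {e_k : k \<ge> 1} in L2(D): f is an L2-limit of finite
linear combinations of the e_k.\<close>
definition in_H :: "'x measure \<Rightarrow> (nat \<Rightarrow> 'x \<Rightarrow> real) \<Rightarrow> ('x \<Rightarrow> real) \<Rightarrow> bool" where
  "in_H D e f \<longleftrightarrow> sq_int D f \<and>
     (\<forall>\<epsilon>>0. \<exists>n c. normD D (\<lambda>x. f x - (\<Sum>k\<in>{1..n}. c k * e k x)) < \<epsilon>)"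

definition lossD :: "'x measure \<Rightarrow> ('x \<Rightarrow> real) \<Rightarrow> ('x \<Rightarrow> real) \<Rightarrow> real" where
  "lossD D fstar f = (LINT x|D. (f x - fstar x)\<^sup>2)"

text \<open>g represents T_t^K(f) = \<Sum>_k (1 - exp(-\<lambda>_k t)) <f,e_k> e_k, the series
converging in L2(D).\<close>
definition is_flow :: "'x measure \<Rightarrow> (nat \<Rightarrow> 'x \<Rightarrow> real) \<Rightarrow> (nat \<Rightarrow> real) \<Rightarrow> real
     \<Rightarrow> ('x \<Rightarrow> real) \<Rightarrow> ('x \<Rightarrow> real) \<Rightarrow> bool" where
  "is_flow D e lam t f g \<longleftrightarrow> sq_int D g \<and>
     (\<lambda>n. normD D (\<lambda>x. g x - (\<Sum>k\<in>{1..n}. (1 - exp (- lam k * t)) * ipD D f (e k) * e k x)))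
       \<longlonglongrightarrow> 0"

end

theory Submission imports Defs begin

(* In the coordinates of the orthonormal family the flow multiplies the k-th coefficient
   a_k of f_teacher by 1 - q_k, where q_k = exp(-lam_k T). By Parseval the claim therefore
   reduces to the coefficientwise inequality
     ((1 - q_k) a_k - b_k)^2 <= (a_k - b_k)^2 + q_K/(2 - q_K) b_k^2 - [k > S] (1 - lam_(S+1)^2 T^2) a_k^2,
   b_k being the coefficients of f*. For k <= K it follows from the identity
     (2 - q) (((1 - q) a - b)^2 - (a - b)^2) - q b^2 = - q ((2 - q) a - b)^2
   together with q_k <= q_K (the lam_k decrease). For k > K we have b_k = 0, and
   0 <= 1 - q_k <= lam_k T <= lam_(S+1) T once k > S. *)

lemma sq_int_mult_integrable:
  assumes "sq_int D f" "sq_int D g"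
  shows "integrable D (\<lambda>x. f x * g x)"
proof (rule Bochner_Integration.integrable_bound[where f="\<lambda>x. (f x)\<^sup>2 + (g x)\<^sup>2"])
  show "integrable D (\<lambda>x. (f x)\<^sup>2 + (g x)\<^sup>2)" "(\<lambda>x. f x * g x) \<in> borel_measurable D"
    using assms unfolding sq_int_def by auto
  have "\<bar>f x * g x\<bar> \<le> (f x)\<^sup>2 + (g x)\<^sup>2" for x
    using sum_squares_bound[of "f x" "g x"] sum_squares_bound[of "f x" "- g x"]
    by (simp add: abs_le_iff)
  then show "AE x in D. norm (f x * g x) \<le> norm ((f x)\<^sup>2 + (g x)\<^sup>2)"
    by simp
qed

lemma sq_int_add:
  assumes "sq_int D f" "sq_int D g"
  shows "sq_int D (\<lambda>x. f x + g x)"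
proof -
  have "(\<lambda>x. (f x + g x)\<^sup>2) = (\<lambda>x. (f x)\<^sup>2 + 2 * (f x * g x) + (g x)\<^sup>2)"
    by (simp add: power2_sum algebra_simps)
  with assms sq_int_mult_integrable[OF assms] show ?thesis
    unfolding sq_int_def by auto
qed

lemma sq_int_cmult: "sq_int D f \<Longrightarrow> sq_int D (\<lambda>x. c * f x)"
  unfolding sq_int_def by (auto simp: power_mult_distrib)

lemma sq_int_diff: "sq_int D f \<Longrightarrow> sq_int D g \<Longrightarrow> sq_int D (\<lambda>x. f x - g x)"
  using sq_int_add[of D f "\<lambda>x. (-1) * g x"] sq_int_cmult[of D g "-1"] by simp

lemma sq_int_sum:
  "finite A \<Longrightarrow> (\<And>k. k \<in> A \<Longrightarrow> sq_int D (f k)) \<Longrightarrow> sq_int D (\<lambda>x. \<Sum>k\<in>A. f k x)"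
proof (induction A rule: finite_induct)
  case empty
  then show ?case by (simp add: sq_int_def)
next
  case (insert a A)
  then show ?case using sq_int_add[of D "f a" "\<lambda>x. \<Sum>k\<in>A. f k x"] by simp
qed

lemma ipD_commute: "ipD D f g = ipD D g f"
  unfolding ipD_def by (simp add: mult.commute)

lemma ipD_self_nonneg: "0 \<le> ipD D f f"
  unfolding ipD_def by simp

lemma ipD_cmult_left: "ipD D (\<lambda>x. c * f x) h = c * ipD D f h"
  unfolding ipD_def by (simp add: mult.assoc)

lemma ipD_add_left:
  "sq_int D f \<Longrightarrow> sq_int D g \<Longrightarrow> sq_int D h \<Longrightarrow>
    ipD D (\<lambda>x. f x + g x) h = ipD D f h + ipD D g h"
  unfolding ipD_def using sq_int_mult_integrable[of D f h] sq_int_mult_integrable[of D g h]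
  by (simp add: distrib_right)

lemma ipD_diff_left:
  "sq_int D f \<Longrightarrow> sq_int D g \<Longrightarrow> sq_int D h \<Longrightarrow>
    ipD D (\<lambda>x. f x - g x) h = ipD D f h - ipD D g h"
  using ipD_add_left[of D f "\<lambda>x. (-1) * g x" h] sq_int_cmult[of D g "-1"]
    ipD_cmult_left[of D "-1" g h]
  by simp

lemma ipD_diff_right:
  "sq_int D f \<Longrightarrow> sq_int D g \<Longrightarrow> sq_int D h \<Longrightarrow>
    ipD D h (\<lambda>x. f x - g x) = ipD D h f - ipD D h g"
  using ipD_diff_left[of D f g h] by (simp add: ipD_commute)

lemma ipD_sum_left:
  "finite A \<Longrightarrow> (\<And>k. k \<in> A \<Longrightarrow> sq_int D (f k)) \<Longrightarrow> sq_int D h \<Longrightarrow>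
    ipD D (\<lambda>x. \<Sum>k\<in>A. f k x) h = (\<Sum>k\<in>A. ipD D (f k) h)"
proof (induction A rule: finite_induct)
  case empty
  then show ?case by (simp add: ipD_def)
next
  case (insert a A)
  then show ?case
    using ipD_add_left[of D "f a" "\<lambda>x. \<Sum>k\<in>A. f k x" h] sq_int_sum[of A D f] by simp
qed

lemma ipD_diff_self:
  "sq_int D u \<Longrightarrow> sq_int D v \<Longrightarrow>
    ipD D (\<lambda>x. u x - v x) (\<lambda>x. u x - v x) = ipD D u u - 2 * ipD D u v + ipD D v v"
  using sq_int_diff[of D u v] by (simp add: ipD_diff_left ipD_diff_right ipD_commute[of D v u])

lemma ipD_diff_self_le:
  assumes "sq_int D u" "sq_int D v"
  shows "ipD D (\<lambda>x. u x - v x) (\<lambda>x. u x - v x) \<le> 2 * ipD D u u + 2 * ipD D v v"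
proof -
  have "sq_int D (\<lambda>x. - v x)"
    using sq_int_cmult[OF assms(2), of "-1"] by simp
  from ipD_diff_self[OF assms(1) this]
  have "ipD D (\<lambda>x. u x + v x) (\<lambda>x. u x + v x) = ipD D u u + 2 * ipD D u v + ipD D v v"
    by (simp add: ipD_def)
  then show ?thesis
    using ipD_diff_self[OF assms] ipD_self_nonneg[of D "\<lambda>x. u x + v x"] by linarith
qed

lemma normD_less_iff: "0 < \<epsilon> \<Longrightarrow> normD D f < \<epsilon> \<longleftrightarrow> ipD D f f < \<epsilon>\<^sup>2"
  unfolding normD_def by (metis abs_of_pos real_sqrt_abs real_sqrt_less_iff)

lemma orthonormal_fam_sq_int: "orthonormal_fam D e \<Longrightarrow> 1 \<le> k \<Longrightarrow> sq_int D (e k)"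
  unfolding orthonormal_fam_def by blast

lemma orthonormal_fam_ipD:
  "orthonormal_fam D e \<Longrightarrow> 1 \<le> i \<Longrightarrow> 1 \<le> j \<Longrightarrow> ipD D (e i) (e j) = (if i = j then 1 else 0)"
  unfolding orthonormal_fam_def by blast

lemma sq_int_lincomb:
  "orthonormal_fam D e \<Longrightarrow> finite A \<Longrightarrow> A \<subseteq> {1..} \<Longrightarrow> sq_int D (\<lambda>x. \<Sum>k\<in>A. c k * e k x)"
  using orthonormal_fam_sq_int[of D e] by (auto intro!: sq_int_sum sq_int_cmult)

lemma ipD_lincomb_basis:
  assumes on: "orthonormal_fam D e" and A: "finite A" "A \<subseteq> {1..}" and j: "1 \<le> j"
  shows "ipD D (\<lambda>x. \<Sum>k\<in>A. c k * e k x) (e j) = (if j \<in> A then c j else 0)"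
proof -
  have "ipD D (\<lambda>x. \<Sum>k\<in>A. c k * e k x) (e j) = (\<Sum>k\<in>A. c k * ipD D (e k) (e j))"
    using A orthonormal_fam_sq_int[OF on] j
    by (subst ipD_sum_left) (auto intro: sq_int_cmult simp: ipD_cmult_left)
  also have "\<dots> = (\<Sum>k\<in>A. if k = j then c j else 0)"
    using A j by (intro sum.cong) (auto simp: orthonormal_fam_ipD[OF on])
  also have "\<dots> = (if j \<in> A then c j else 0)"
    using A by (simp add: sum.delta')
  finally show ?thesis .
qed

lemma ipD_lincomb_right:
  assumes on: "orthonormal_fam D e" and A: "finite A" "A \<subseteq> {1..}" and h: "sq_int D h"
  shows "ipD D h (\<lambda>x. \<Sum>k\<in>A. c k * e k x) = (\<Sum>k\<in>A. c k * ipD D h (e k))"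
  using A h orthonormal_fam_sq_int[OF on]
  by (subst ipD_commute, subst ipD_sum_left)
    (auto intro: sq_int_cmult simp: ipD_cmult_left ipD_commute)

lemma ipD_lincomb_self:
  assumes on: "orthonormal_fam D e" and A: "finite A" "A \<subseteq> {1..}"
  shows "ipD D (\<lambda>x. \<Sum>k\<in>A. c k * e k x) (\<lambda>x. \<Sum>k\<in>A. c k * e k x) = (\<Sum>k\<in>A. (c k)\<^sup>2)"
proof -
  have "ipD D (\<lambda>x. \<Sum>k\<in>A. c k * e k x) (\<lambda>x. \<Sum>k\<in>A. c k * e k x)
      = (\<Sum>k\<in>A. c k * ipD D (\<lambda>x. \<Sum>k\<in>A. c k * e k x) (e k))"
    by (rule ipD_lincomb_right[OF on A sq_int_lincomb[OF on A]])
  also have "\<dots> = (\<Sum>k\<in>A. (c k)\<^sup>2)"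
    using A by (intro sum.cong) (auto simp: ipD_lincomb_basis[OF on A] power2_eq_square)
  finally show ?thesis .
qed

lemma ipD_residual_self:
  assumes "orthonormal_fam D e" "finite A" "A \<subseteq> {1..}" "sq_int D h"
  shows "ipD D (\<lambda>x. h x - (\<Sum>k\<in>A. c k * e k x)) (\<lambda>x. h x - (\<Sum>k\<in>A. c k * e k x))
     = ipD D h h - 2 * (\<Sum>k\<in>A. c k * ipD D h (e k)) + (\<Sum>k\<in>A. (c k)\<^sup>2)"
  using ipD_diff_self[OF assms(4) sq_int_lincomb[OF assms(1-3)]]
    ipD_lincomb_right[OF assms] ipD_lincomb_self[OF assms(1-3)]
  by simp

lemma ipD_residual_self_ge:
  assumes "orthonormal_fam D e" "finite A" "A \<subseteq> {1..}" "sq_int D h"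
  shows "ipD D h h - (\<Sum>k\<in>A. (ipD D h (e k))\<^sup>2)
     \<le> ipD D (\<lambda>x. h x - (\<Sum>k\<in>A. c k * e k x)) (\<lambda>x. h x - (\<Sum>k\<in>A. c k * e k x))"
proof -
  have "2 * (\<Sum>k\<in>A. c k * ipD D h (e k)) - (\<Sum>k\<in>A. (c k)\<^sup>2)
      = (\<Sum>k\<in>A. 2 * c k * ipD D h (e k) - (c k)\<^sup>2)"
    by (simp add: sum_subtractf sum_distrib_left mult.assoc)
  also have "\<dots> \<le> (\<Sum>k\<in>A. (ipD D h (e k))\<^sup>2)"
    by (intro sum_mono) (smt (verit) sum_squares_bound)
  finally show ?thesis
    using ipD_residual_self[OF assms, of c] by linarith
qed

lemma bessel_inequality:
  assumes "orthonormal_fam D e" "finite A" "A \<subseteq> {1..}" "sq_int D h"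
  shows "(\<Sum>k\<in>A. (ipD D h (e k))\<^sup>2) \<le> ipD D h h"
  using ipD_residual_self[OF assms, of "\<lambda>k. ipD D h (e k)"]
    ipD_self_nonneg[of D "\<lambda>x. h x - (\<Sum>k\<in>A. ipD D h (e k) * e k x)"]
  by (simp add: power2_eq_square)

lemma abs_ipD_basis_le_normD:
  assumes "orthonormal_fam D e" "sq_int D u" "1 \<le> j"
  shows "\<bar>ipD D u (e j)\<bar> \<le> normD D u"
proof -
  have "(ipD D u (e j))\<^sup>2 \<le> ipD D u u"
    using bessel_inequality[OF assms(1), of "{j}" u] assms(2,3) by simp
  then show ?thesis
    unfolding normD_def using real_sqrt_le_mono by fastforce
qed

lemma in_H_parseval:
  assumes on: "orthonormal_fam D e" and H: "in_H D e h"
  shows "(\<lambda>k. (ipD D h (e (k + 1)))\<^sup>2) sums ipD D h h"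
proof -
  define coeff2 where "coeff2 k = (ipD D h (e (k + 1)))\<^sup>2" for k
  have h: "sq_int D h"
    using H unfolding in_H_def by simp
  have partial: "(\<Sum>k<n. coeff2 k) = (\<Sum>k\<in>{1..n}. (ipD D h (e k))\<^sup>2)" for n
    using sum.atLeast1_atMost_eq[of "\<lambda>k. (ipD D h (e k))\<^sup>2" n] by (simp add: coeff2_def)
  have bessel: "(\<Sum>k<n. coeff2 k) \<le> ipD D h h" for n
    unfolding partial by (rule bessel_inequality[OF on _ _ h]) auto
  have summable: "summable coeff2"
    by (rule summableI_nonneg_bounded[OF _ bessel]) (simp add: coeff2_def)
  have "ipD D h h < suminf coeff2 + \<epsilon>\<^sup>2" if "0 < \<epsilon>" for \<epsilon>
  proof -
    obtain n c where "normD D (\<lambda>x. h x - (\<Sum>k\<in>{1..n}. c k * e k x)) < \<epsilon>"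
      using H \<open>0 < \<epsilon>\<close> unfolding in_H_def by blast
    then have "ipD D h h - (\<Sum>k\<in>{1..n}. (ipD D h (e k))\<^sup>2) < \<epsilon>\<^sup>2"
      using ipD_residual_self_ge[OF on _ _ h, of "{1..n}" c] normD_less_iff[OF \<open>0 < \<epsilon>\<close>]
      by fastforce
    moreover have "(\<Sum>k<n. coeff2 k) \<le> suminf coeff2"
      by (rule sum_le_suminf[OF summable]) (auto simp: coeff2_def)
    ultimately show ?thesis
      unfolding partial by linarith
  qed
  then have "ipD D h h \<le> suminf coeff2 + d" if "0 < d" for d
    using that by (metis less_imp_le real_sqrt_gt_0_iff real_sqrt_pow2)
  then have "ipD D h h \<le> suminf coeff2"
    by (rule field_le_epsilon)
  moreover have "suminf coeff2 \<le> ipD D h h"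
    by (rule suminf_le_const[OF summable bessel])
  ultimately show ?thesis
    using summable unfolding coeff2_def by (simp add: sums_iff)
qed

lemma lincomb_zero_extend:
  fixes c :: "nat \<Rightarrow> real"
  assumes "n \<le> N"
  shows "(\<Sum>k\<in>{1..N}. (if k \<le> n then c k else 0) * e k x) = (\<Sum>k\<in>{1..n}. c k * e k x)"
proof -
  have "(\<Sum>k\<in>{1..N}. (if k \<le> n then c k else 0) * e k x)
      = (\<Sum>k\<in>{1..N} \<inter> {..n}. c k * e k x)"
    by (subst sum.inter_restrict) (auto intro: sum.cong)
  also have "{1..N} \<inter> {..n} = {1..n}"
    using assms by auto
  finally show ?thesis .
qed

lemma in_H_diff:
  assumes on: "orthonormal_fam D e" and H: "in_H D e f" "in_H D e g"
  shows "in_H D e (\<lambda>x. f x - g x)"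
  unfolding in_H_def
proof (intro conjI allI impI)
  have f: "sq_int D f" and g: "sq_int D g"
    using H unfolding in_H_def by auto
  then show "sq_int D (\<lambda>x. f x - g x)"
    by (rule sq_int_diff)
  fix \<epsilon> :: real
  assume "0 < \<epsilon>"
  then have \<epsilon>2: "0 < \<epsilon> / 2" by simp
  obtain n c where approx_f: "normD D (\<lambda>x. f x - (\<Sum>k\<in>{1..n}. c k * e k x)) < \<epsilon> / 2"
    using H(1) \<epsilon>2 unfolding in_H_def by blast
  obtain m d where approx_g: "normD D (\<lambda>x. g x - (\<Sum>k\<in>{1..m}. d k * e k x)) < \<epsilon> / 2"
    using H(2) \<epsilon>2 unfolding in_H_def by blast
  define N where "N = max n m"
  define cd where "cd k = (if k \<le> n then c k else 0) - (if k \<le> m then d k else 0)" for k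
  let ?u = "\<lambda>x. f x - (\<Sum>k\<in>{1..n}. c k * e k x)"
  let ?v = "\<lambda>x. g x - (\<Sum>k\<in>{1..m}. d k * e k x)"
  have residual: "(\<lambda>x. f x - g x - (\<Sum>k\<in>{1..N}. cd k * e k x)) = (\<lambda>x. ?u x - ?v x)"
    using lincomb_zero_extend[of n N c e] lincomb_zero_extend[of m N d e]
    by (simp add: N_def cd_def left_diff_distrib sum_subtractf algebra_simps)
  have "sq_int D ?u" "sq_int D ?v"
    using f g by (auto intro!: sq_int_diff sq_int_lincomb[OF on])
  then have "ipD D (\<lambda>x. ?u x - ?v x) (\<lambda>x. ?u x - ?v x) \<le> 2 * ipD D ?u ?u + 2 * ipD D ?v ?v"
    by (rule ipD_diff_self_le)
  also have "\<dots> < 2 * (\<epsilon> / 2)\<^sup>2 + 2 * (\<epsilon> / 2)\<^sup>2"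
    using approx_f approx_g normD_less_iff[OF \<epsilon>2] by (intro add_strict_mono) auto
  also have "\<dots> = \<epsilon>\<^sup>2"
    by (simp add: power_divide)
  finally have "normD D (\<lambda>x. ?u x - ?v x) < \<epsilon>"
    using normD_less_iff[OF \<open>0 < \<epsilon>\<close>] by blast
  then show "\<exists>n c. normD D (\<lambda>x. f x - g x - (\<Sum>k\<in>{1..n}. c k * e k x)) < \<epsilon>"
    unfolding residual[symmetric] by blast
qed

lemma is_flow_in_H:
  assumes "is_flow D e lam t f g"
  shows "in_H D e g"
  unfolding in_H_def
proof (intro conjI allI impI)
  show "sq_int D g"
    using assms unfolding is_flow_def by simp
  fix \<epsilon> :: real
  assume "0 < \<epsilon>"
  then have "\<forall>\<^sub>F n in sequentially.
      normD D (\<lambda>x. g x - (\<Sum>k\<in>{1..n}. (1 - exp (- lam k * t)) * ipD D f (e k) * e k x)) < \<epsilon>"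
    using assms order_tendstoD(2) unfolding is_flow_def by blast
  then obtain n where
    "normD D (\<lambda>x. g x - (\<Sum>k\<in>{1..n}. ((1 - exp (- lam k * t)) * ipD D f (e k)) * e k x)) < \<epsilon>"
    unfolding eventually_sequentially by blast
  then show "\<exists>n c. normD D (\<lambda>x. g x - (\<Sum>k\<in>{1..n}. c k * e k x)) < \<epsilon>"
    by (intro exI[of _ n] exI[of _ "\<lambda>k. (1 - exp (- lam k * t)) * ipD D f (e k)"])
qed

lemma is_flow_coeff:
  assumes on: "orthonormal_fam D e" and flow: "is_flow D e lam t f g" and j: "1 \<le> j"
  shows "ipD D g (e j) = (1 - exp (- lam j * t)) * ipD D f (e j)"
proof -
  define c where "c k = (1 - exp (- lam k * t)) * ipD D f (e k)" for k
  let ?residual = "\<lambda>n x. g x - (\<Sum>k\<in>{1..n}. c k * e k x)"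
  have g: "sq_int D g" and lim: "(\<lambda>n. normD D (?residual n)) \<longlonglongrightarrow> 0"
    using flow unfolding is_flow_def c_def by (auto simp: mult.assoc)
  have "\<bar>ipD D g (e j) - c j\<bar> \<le> normD D (?residual n)" if "j \<le> n" for n
  proof -
    have comb: "sq_int D (\<lambda>x. \<Sum>k\<in>{1..n}. c k * e k x)"
      by (rule sq_int_lincomb[OF on]) auto
    have "ipD D (?residual n) (e j) = ipD D g (e j) - c j"
      using ipD_diff_left[OF g comb orthonormal_fam_sq_int[OF on j]]
        ipD_lincomb_basis[OF on _ _ j, of "{1..n}" c] that j
      by simp
    then show ?thesis
      using abs_ipD_basis_le_normD[OF on sq_int_diff[OF g comb] j] by simp
  qed
  then have "\<bar>ipD D g (e j) - c j\<bar> \<le> 0"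
    by (intro LIMSEQ_le_const[OF lim]) blast
  then show ?thesis
    unfolding c_def by simp
qed

lemma lossD_sums:
  assumes on: "orthonormal_fam D e" and "in_H D e fstar" "in_H D e f"
  shows "(\<lambda>k. (ipD D f (e (k + 1)) - ipD D fstar (e (k + 1)))\<^sup>2) sums lossD D fstar f"
proof -
  have "sq_int D f" "sq_int D fstar"
    using assms unfolding in_H_def by auto
  then have "ipD D (\<lambda>x. f x - fstar x) (e (k + 1)) = ipD D f (e (k + 1)) - ipD D fstar (e (k + 1))"
    for k
    using orthonormal_fam_sq_int[OF on] by (simp add: ipD_diff_left)
  moreover have "lossD D fstar f = ipD D (\<lambda>x. f x - fstar x) (\<lambda>x. f x - fstar x)"
    unfolding lossD_def ipD_def by (simp add: power2_eq_square)
  ultimately show ?thesis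
    using in_H_parseval[OF on in_H_diff[OF on assms(3,2)]] by simp
qed

lemma sums_if_ge:
  fixes f :: "nat \<Rightarrow> real"
  assumes "summable f"
  shows "(\<lambda>k. if n \<le> k then f k else 0) sums (\<Sum>k. f (k + n))"
proof -
  have "(\<lambda>k. f (k + n)) sums (\<Sum>k. f (k + n))"
    using assms by (simp add: summable_sums)
  then show ?thesis
    using sums_zero_iff_shift[of n "\<lambda>k. if n \<le> k then f k else 0"] by simp
qed

lemma decreasing_from_le:
  fixes f :: "nat \<Rightarrow> 'a::order"
  assumes "\<forall>k\<ge>m. f (Suc k) \<le> f k" "m \<le> i" "i \<le> j"
  shows "f j \<le> f i"
  using assms(3)
proof (induction j rule: dec_induct)
  case base
  then show ?case by simp
next
  case (step n)
  then have "f (Suc n) \<le> f n"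
    using assms(1,2) by simp
  then show ?case
    using step.IH by (rule order_trans)
qed

lemma sq_shrink_error_le:
  fixes q r a b :: real
  assumes "0 < q" "q \<le> r" "r \<le> 1"
  shows "((1 - q) * a - b)\<^sup>2 \<le> (a - b)\<^sup>2 + r / (2 - r) * b\<^sup>2"
proof -
  have pos: "0 < 2 - q" "0 < 2 - r"
    using assms by auto
  have "(2 - q) * (((1 - q) * a - b)\<^sup>2 - (a - b)\<^sup>2) - q * b\<^sup>2 = - q * ((2 - q) * a - b)\<^sup>2"
    by (simp add: power2_eq_square algebra_simps)
  also have "\<dots> \<le> 0"
    using assms by simp
  finally have "((1 - q) * a - b)\<^sup>2 - (a - b)\<^sup>2 \<le> q / (2 - q) * b\<^sup>2"
    using pos by (simp add: field_simps)
  also have "\<dots> \<le> r / (2 - r) * b\<^sup>2"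
    using pos assms by (intro mult_right_mono) (simp_all add: field_simps)
  finally show ?thesis by simp
qed

lemma flow_coeff_error_le:
  fixes lam :: "nat \<Rightarrow> real" and a b T :: real
  assumes lam_nonneg: "\<forall>k\<ge>1. lam k \<ge> 0" and lam_decr: "\<forall>k\<ge>1. lam (Suc k) \<le> lam k"
    and "1 \<le> K" "K \<le> S" "0 < T" "1 \<le> k" and b_vanish: "K < k \<Longrightarrow> b = 0"
  shows "((1 - exp (- lam k * T)) * a - b)\<^sup>2
    \<le> (a - b)\<^sup>2 + exp (- lam K * T) / (2 - exp (- lam K * T)) * b\<^sup>2
      - (if S < k then (1 - (lam (S + 1))\<^sup>2 * T\<^sup>2) * a\<^sup>2 else 0)"
proof -
  define q where "q = exp (- lam k * T)"
  have "0 < q" "q \<le> 1"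
    using lam_nonneg assms(5,6) by (auto simp: q_def)
  consider "k \<le> K" | "K < k" "k \<le> S" | "S < k"
    by linarith
  then show ?thesis
  proof cases
    case 1
    have "lam K \<le> lam k"
      using decreasing_from_le[OF lam_decr assms(6) 1] .
    then have "q \<le> exp (- lam K * T)"
      using assms(5) by (simp add: q_def mult_right_mono)
    moreover have "exp (- lam K * T) \<le> 1"
      using lam_nonneg assms(3,5) by simp
    ultimately have "((1 - q) * a - b)\<^sup>2 \<le> (a - b)\<^sup>2 + exp (- lam K * T) / (2 - exp (- lam K * T)) * b\<^sup>2"
      using sq_shrink_error_le[OF \<open>0 < q\<close>] by blast
    moreover have "\<not> S < k"
      using 1 assms(4) by simp
    ultimately show ?thesis
      by (simp add: q_def)
  next
    case 2
    have "((1 - q) * a)\<^sup>2 \<le> a\<^sup>2"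
      using \<open>0 < q\<close> \<open>q \<le> 1\<close> by (simp add: power_mult_distrib power_le_one mult_left_le_one_le)
    then show ?thesis
      using 2 b_vanish by (simp add: q_def)
  next
    case 3
    have "1 - q \<le> lam k * T"
      using exp_ge_add_one_self[of "- lam k * T"] by (simp add: q_def)
    also have "\<dots> \<le> lam (S + 1) * T"
      using decreasing_from_le[OF lam_decr, of "S + 1" k] 3 assms(3-5) by (simp add: mult_right_mono)
    finally have "(1 - q)\<^sup>2 * a\<^sup>2 \<le> (lam (S + 1) * T)\<^sup>2 * a\<^sup>2"
      using \<open>q \<le> 1\<close> by (intro mult_right_mono power_mono) auto
    moreover have "a\<^sup>2 - (1 - (lam (S + 1))\<^sup>2 * T\<^sup>2) * a\<^sup>2 = (lam (S + 1) * T)\<^sup>2 * a\<^sup>2"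
      by (simp add: algebra_simps)
    moreover have "b = 0"
      using 3 assms(4) b_vanish by simp
    ultimately show ?thesis
      using 3 by (simp add: q_def power_mult_distrib)
  qed
qed

theorem lemma6p2:
  fixes D :: "'x measure" and Ker :: "'x \<Rightarrow> 'x \<Rightarrow> real"
    and lam :: "nat \<Rightarrow> real" and e :: "nat \<Rightarrow> 'x \<Rightarrow> real"
    and fstar fteacher fT :: "'x \<Rightarrow> real" and K S :: nat and T :: real
  assumes "prob_space D"
    and "orthonormal_fam D e"
    and "\<forall>k\<ge>1. lam k \<ge> 0" and "\<forall>k\<ge>1. lam (Suc k) \<le> lam k"
    and "\<forall>x x'. (\<lambda>k. lam (Suc k) * e (Suc k) x * e (Suc k) x') sums Ker x x'"
    and "in_H D e fstar"
    and "K \<ge> 1"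
    and "\<forall>k>K. ipD D fstar (e k) = 0"
    and "\<forall>k\<in>{1..K}. lam k = 0 \<longrightarrow> ipD D fstar (e k) = 0"
    and "in_H D e fteacher" and "T > 0" and "S \<ge> K"
    and "is_flow D e lam T fteacher fT"
  shows "lossD D fstar fT \<le> lossD D fstar fteacher
           + exp (- lam K * T) / (2 - exp (- lam K * T)) * (normD D fstar)\<^sup>2
           - (1 - (lam (S + 1))\<^sup>2 * T\<^sup>2) * (\<Sum>k. (ipD D fteacher (e (k + S + 1)))\<^sup>2)"
proof -
  note on = assms(2) and fstar_H = assms(6) and teacher_H = assms(10) and flow = assms(13)
  define a where "a k = ipD D fteacher (e (k + 1))" for k
  define b where "b k = ipD D fstar (e (k + 1))" for k
  define c where "c = exp (- lam K * T) / (2 - exp (- lam K * T))"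
  define m where "m = 1 - (lam (S + 1))\<^sup>2 * T\<^sup>2"
  have loss_fT: "(\<lambda>k. ((1 - exp (- lam (k + 1) * T)) * a k - b k)\<^sup>2) sums lossD D fstar fT"
    using lossD_sums[OF on fstar_H is_flow_in_H[OF flow]] is_flow_coeff[OF on flow]
    by (simp add: a_def b_def)
  have loss_teacher: "(\<lambda>k. (a k - b k)\<^sup>2) sums lossD D fstar fteacher"
    using lossD_sums[OF on fstar_H teacher_H] by (simp add: a_def b_def)
  have norm_fstar: "(\<lambda>k. (b k)\<^sup>2) sums (normD D fstar)\<^sup>2"
    using in_H_parseval[OF on fstar_H] ipD_self_nonneg[of D fstar] by (simp add: b_def normD_def)
  have tail: "(\<lambda>k. if S \<le> k then (a k)\<^sup>2 else 0) sums (\<Sum>k. (ipD D fteacher (e (k + S + 1)))\<^sup>2)"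
    using sums_if_ge[of "\<lambda>k. (a k)\<^sup>2" S] in_H_parseval[OF on teacher_H]
    by (simp add: a_def sums_iff)
  have "((1 - exp (- lam (k + 1) * T)) * a k - b k)\<^sup>2
      \<le> (a k - b k)\<^sup>2 + c * (b k)\<^sup>2 - m * (if S \<le> k then (a k)\<^sup>2 else 0)" for k
    using flow_coeff_error_le[OF assms(3,4,7,12,11), of "k + 1" "b k" "a k"] assms(8)
    unfolding c_def m_def by (simp add: b_def less_Suc_eq_le split: if_split_asm)
  then have "lossD D fstar fT \<le> lossD D fstar fteacher + c * (normD D fstar)\<^sup>2
      - m * (\<Sum>k. (ipD D fteacher (e (k + S + 1)))\<^sup>2)"
    by (rule sums_le[OF _ loss_fT sums_diff[OF sums_add[OF loss_teacher sums_mult[OF norm_fstar]]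
          sums_mult[OF tail]]])
  then show ?thesis
    unfolding c_def m_def .
qed

end
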